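(* Let $K$ be a field of characteristic zero, and suppose $F\in K[X]$ has the property that $u\circ F\circ v$ has at least two monomial terms whenever $u,v\in K[X]$ are of degree one. Then the equation $F\circ b=a\circ F$ has only finitely many solutions in degree-one polynomials $a,b\in K[X]$.
   Context: $\circ$ denotes composition of polynomials. *)

theory Defs
  imports "HOL-Computational_Algebra.Polynomial"
begin

definition num_terms :: "'a::zero poly \<Rightarrow> nat" where
  "num_terms p = card {i. coeff p i \<noteq> 0}"

end

theory Submission
  imports Defs
begin

text \<open>Normalize \<open>F\<close> of degree \<open>n\<close> by a translation so that its \<open>X\<^sup>n\<^sup>-\<^sup>1\<close> coefficient
  vanishes (characteristic zero makes \<open>n\<close> invertible); the hypothesis forbids the result to be
  of the form \<open>g\<^sub>0 + g X\<^sup>n\<close>, so some coefficient of \<open>X\<^sup>k\<close> with \<open>0 < k < n - 1\<close> is nonzero.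
  For a solution \<open>G \<circ> (h\<^sub>0 + h\<^sub>1 X) = a \<circ> G\<close> of the normalized equation, comparing the
  coefficients of \<open>X\<^sup>n\<close>, \<open>X\<^sup>n\<^sup>-\<^sup>1\<close> and \<open>X\<^sup>k\<close> gives \<open>a\<^sub>1 = h\<^sub>1\<^sup>n\<close>, \<open>h\<^sub>0 = 0\<close> and
  \<open>h\<^sub>1\<^sup>n\<^sup>-\<^sup>k = 1\<close>. Hence \<open>b\<close> ranges over finitely many polynomials, and \<open>a\<close> is determined by \<open>b\<close>
  since composition on the right with a nonconstant polynomial is injective. Conjugating \<open>b\<close> by
  the translation carries solutions for \<open>F\<close> injectively to solutions for \<open>G\<close>.\<close>

lemma num_terms_const: "num_terms [:c:] \<le> 1"
proof -
  have "{i. coeff [:c:] i \<noteq> 0} \<subseteq> {0}"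
    using le_degree[of "[:c:]"] by auto
  then have "card {i. coeff [:c:] i \<noteq> 0} \<le> card {0::nat}"
    by (intro card_mono) auto
  then show ?thesis by (simp add: num_terms_def)
qed

lemma num_terms_monom: "c \<noteq> 0 \<Longrightarrow> num_terms (monom c m) = 1"
proof -
  assume "c \<noteq> 0"
  then have "{i. coeff (monom c m) i \<noteq> 0} = {m}" by auto
  then show ?thesis by (simp add: num_terms_def)
qed

lemma pcompose_linear_left: "pcompose [:x, y:] p = [:x:] + smult y p"
  by (simp add: pcompose_pCons)

lemma pcompose_linear_normalizes_binomial:
  fixes g :: "'a::field"
  assumes "g \<noteq> 0"
  shows "pcompose [:-g0/g, 1/g:] ([:g0:] + monom g m) = monom 1 m"
  using assms by (simp add: pcompose_linear_left smult_add_right smult_monom)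

lemma degree_1_poly_eq: "degree p = 1 \<Longrightarrow> p = [:coeff p 0, coeff p 1:]"
  by (rule poly_eqI) (auto simp: coeff_pCons coeff_eq_0 split: nat.splits)

lemma coeff_pcompose_degree_1_left:
  assumes "degree a = 1"
  shows "coeff (pcompose a p) i = (if i = 0 then coeff a 0 else 0) + coeff a 1 * coeff p i"
  by (subst degree_1_poly_eq[OF assms]) (simp add: pcompose_linear_left coeff_pCons split: nat.split)

lemma poly_eq_const_plus_monom:
  assumes "degree p > 0" and "\<And>k. 0 < k \<Longrightarrow> k < degree p \<Longrightarrow> coeff p k = 0"
  shows "p = [:coeff p 0:] + monom (lead_coeff p) (degree p)"
proof (rule poly_eqI)
  fix i
  show "coeff p i = coeff ([:coeff p 0:] + monom (lead_coeff p) (degree p)) i"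
    using assms by (cases "i = 0"; cases "i < degree p"; cases "i = degree p")
      (auto simp: coeff_pCons coeff_eq_0 split: nat.splits)
qed

lemma degree_linear_power_le: "degree ([:h0, h1:] ^ i) \<le> i"
  for h0 h1 :: "'a::comm_ring_1"
  using degree_power_le[of "[:h0, h1:]" i] by (cases "h1 = 0") auto

lemma coeff_pcompose_linear_subleading:
  fixes p :: "'a::comm_ring_1 poly"
  assumes "degree p = n" "n \<ge> 1"
  shows "coeff (pcompose p [:h0, h1:]) (n - 1)
           = coeff p (n - 1) * h1 ^ (n - 1) + of_nat n * lead_coeff p * h1 ^ (n - 1) * h0"
proof -
  let ?q = "[:h0, h1:]"
  have "coeff (pcompose p ?q) (n - 1) = (\<Sum>i\<le>n. coeff p i * coeff (?q ^ i) (n - 1))"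
    unfolding pcompose_altdef poly_altdef
    by (simp add: degree_map_poly coeff_map_poly coeff_sum assms)
  also have "\<dots> = (\<Sum>i\<in>{n - 1, n}. coeff p i * coeff (?q ^ i) (n - 1))"
  proof (rule sum.mono_neutral_right)
    show "\<forall>i\<in>{..n} - {n - 1, n}. coeff p i * coeff (?q ^ i) (n - 1) = 0"
    proof
      fix i assume "i \<in> {..n} - {n - 1, n}"
      then have "i < n - 1" by auto
      then have "degree (?q ^ i) < n - 1"
        using degree_linear_power_le[of h0 h1 i] by linarith
      then show "coeff p i * coeff (?q ^ i) (n - 1) = 0" by (simp add: coeff_eq_0)
    qed
  qed (use assms in auto)
  also have "\<dots> = coeff p (n - 1) * h1 ^ (n - 1) + of_nat n * lead_coeff p * h1 ^ (n - 1) * h0"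
    using assms binomial_symmetric[of 1 n] by (simp add: coeff_linear_poly_power mult_ac)
  finally show ?thesis .
qed

lemma exists_translation_kills_subleading_coeff:
  fixes p :: "'a::field_char_0 poly"
  assumes "degree p > 0"
  obtains c where "coeff (pcompose p [:-c, 1:]) (degree p - 1) = 0"
proof
  let ?n = "degree p"
  define c where "c = coeff p (?n - 1) / (of_nat ?n * lead_coeff p)"
  have "lead_coeff p \<noteq> 0" using assms by auto
  then show "coeff (pcompose p [:-c, 1:]) (?n - 1) = 0"
    using coeff_pcompose_linear_subleading[of p ?n "-c" 1] assms
    unfolding c_def by (simp add: field_simps)
qed

lemma pcompose_cancel_right:
  fixes p q r :: "'a::idom poly"
  assumes "degree q > 0" "pcompose p q = pcompose r q"
  shows "p = r"
  using pcompose_eq_0[of "p - r" q] assms by (simp add: pcompose_diff)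

lemma finite_roots_of_unity: "m > 0 \<Longrightarrow> finite {t::'a::idom. t ^ m = 1}"
proof -
  assume "m > 0"
  then have "coeff (monom (1::'a) m - 1) m = 1" by simp
  then have "monom (1::'a) m - 1 \<noteq> 0" by (metis coeff_0 zero_neq_one)
  from poly_roots_finite[OF this] show ?thesis
    by (simp add: poly_monom)
qed

definition linear_semiconjugacies :: "'a::comm_ring_1 poly \<Rightarrow> ('a poly \<times> 'a poly) set" where
  "linear_semiconjugacies F =
     {(a, b). degree a = 1 \<and> degree b = 1 \<and> pcompose F b = pcompose a F}"

lemma linear_semiconjugacy_of_depressed:
  fixes G :: "'a::field_char_0 poly"
  assumes "coeff G (degree G - 1) = 0" "0 < k" "k < degree G" "coeff G k \<noteq> 0"
    and "(a, b) \<in> linear_semiconjugacies G"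
  shows "b = [:0, coeff b 1:]" "coeff b 1 ^ (degree G - k) = 1"
proof -
  let ?n = "degree G" and ?h1 = "coeff b 1"
  from assms(5) have da: "degree a = 1" and db: "degree b = 1"
    and eq: "pcompose G b = pcompose a G"
    unfolding linear_semiconjugacies_def by auto
  have b_eq: "b = [:coeff b 0, ?h1:]" using degree_1_poly_eq[OF db] .
  have h1: "?h1 \<noteq> 0" using db leading_coeff_0_iff[of b] by fastforce
  have lc: "lead_coeff G \<noteq> 0" using assms(2,3) by auto
  note coeff_right = coeff_pcompose_degree_1_left[OF da, of G]
  have "lead_coeff G * ?h1 ^ ?n = coeff (pcompose G b) ?n"
    using lead_coeff_comp[of b G] degree_pcompose[of G b] db by simp
  also have "\<dots> = coeff a 1 * lead_coeff G"
    using eq coeff_right[of ?n] assms(2,3) by simp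
  finally have "lead_coeff G * ?h1 ^ ?n = coeff a 1 * lead_coeff G" .
  then have a1: "coeff a 1 = ?h1 ^ ?n" using lc by simp
  have "of_nat ?n * lead_coeff G * ?h1 ^ (?n - 1) * coeff b 0 = coeff (pcompose G b) (?n - 1)"
    using coeff_pcompose_linear_subleading[of G ?n "coeff b 0" ?h1] b_eq assms(1,3) by simp
  also have "\<dots> = 0" using eq coeff_right[of "?n - 1"] assms(1,2,3) by simp
  finally have "coeff b 0 = 0" using lc h1 assms(3) by simp
  then show b0: "b = [:0, ?h1:]" using b_eq by simp
  have "?h1 ^ k * coeff G k = coeff (pcompose G b) k"
    by (metis b0 coeff_pcompose_linear)
  also have "\<dots> = ?h1 ^ ?n * coeff G k"
    using eq coeff_right[of k] a1 assms(2) by simp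
  finally have "?h1 ^ k = ?h1 ^ ?n" using assms(4) by simp
  also have "\<dots> = ?h1 ^ k * ?h1 ^ (?n - k)"
    using assms(3) by (simp flip: power_add)
  finally show "?h1 ^ (?n - k) = 1" using h1 by simp
qed

lemma finite_linear_semiconjugacies_of_depressed:
  fixes G :: "'a::field_char_0 poly"
  assumes "coeff G (degree G - 1) = 0" "0 < k" "k < degree G" "coeff G k \<noteq> 0"
  shows "finite (linear_semiconjugacies G)"
proof -
  let ?S = "linear_semiconjugacies G"
  have "snd ` ?S \<subseteq> (\<lambda>t. [:0, t:]) ` {t. t ^ (degree G - k) = 1}"
    using linear_semiconjugacy_of_depressed[OF assms] by fastforce
  moreover have "finite ((\<lambda>t. [:0, t:]) ` {t::'a. t ^ (degree G - k) = 1})"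
    using finite_roots_of_unity[of "degree G - k"] assms(3) by (intro finite_imageI) simp
  ultimately have "finite (snd ` ?S)" by (rule finite_subset)
  moreover have "inj_on snd ?S"
  proof (rule inj_onI)
    fix x y assume "x \<in> ?S" "y \<in> ?S" "snd x = snd y"
    then have "pcompose (fst x) G = pcompose G (snd x)" "pcompose (fst y) G = pcompose G (snd x)"
      unfolding linear_semiconjugacies_def by (auto split: prod.splits)
    then have "fst x = fst y" using assms(2,3) pcompose_cancel_right[of G] by simp
    with \<open>snd x = snd y\<close> show "x = y" by (simp add: prod_eq_iff)
  qed
  ultimately show ?thesis by (rule finite_imageD)
qed

lemma finite_linear_semiconjugacies_translate:
  fixes G :: "'a::idom poly"
  assumes "finite (linear_semiconjugacies G)"
  shows "finite (linear_semiconjugacies (pcompose G [:c, 1:]))"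
proof -
  let ?F = "pcompose G [:c, 1:]"
  define conj where "conj b = pcompose [:c, 1:] (pcompose b [:-c, 1:])" for b :: "'a poly"
  have inv: "pcompose [:c, 1:] [:-c, 1:] = [:0, 1:]"
    by (simp add: pcompose_linear_left)
  have "map_prod id conj ` linear_semiconjugacies ?F \<subseteq> linear_semiconjugacies G"
  proof clarsimp
    fix a b assume "(a, b) \<in> linear_semiconjugacies ?F"
    then have "degree b = 1" "degree a = 1" "pcompose ?F b = pcompose a ?F"
      unfolding linear_semiconjugacies_def by auto
    moreover have "pcompose (pcompose a ?F) [:-c, 1:] = pcompose a G"
      by (simp flip: pcompose_assoc add: inv)
    ultimately show "(a, conj b) \<in> linear_semiconjugacies G"
      unfolding linear_semiconjugacies_def conj_def by (simp add: degree_pcompose pcompose_assoc)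
  qed
  moreover have "inj_on (map_prod id conj) (linear_semiconjugacies ?F)"
  proof -
    have "inj conj"
    proof (rule injI)
      fix b b' assume "conj b = conj b'"
      then have "pcompose b [:-c, 1:] = pcompose b' [:-c, 1:]"
        by (simp add: conj_def pcompose_linear_left)
      then show "b = b'" by (rule pcompose_cancel_right[rotated]) simp
    qed
    then show ?thesis using prod.inj_map[OF inj_on_id] by (metis inj_on_subset subset_UNIV)
  qed
  ultimately show ?thesis
    using assms finite_subset finite_imageD by metis
qed

theorem lemma4p1:
  fixes F :: "'a::field_char_0 poly"
  assumes "\<And>u v. degree u = 1 \<Longrightarrow> degree v = 1 \<Longrightarrow>
             num_terms (pcompose u (pcompose F v)) \<ge> 2"
  shows "finite {(a, b). degree a = 1 \<and> degree b = 1 \<and> pcompose F b = pcompose a F}"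
proof -
  have not_binomial: "pcompose F v \<noteq> [:g0:] + monom g m" if "degree v = 1" "g \<noteq> 0" for v g0 g m
  proof
    assume "pcompose F v = [:g0:] + monom g m"
    then have "num_terms (pcompose [:-g0/g, 1/g:] (pcompose F v)) = 1"
      using pcompose_linear_normalizes_binomial[OF that(2)] num_terms_monom[of "1::'a"] by simp
    then show False using assms[of "[:-g0/g, 1/g:]" v] that by simp
  qed
  have "degree F \<noteq> 0"
  proof
    assume "degree F = 0"
    then have "num_terms F \<le> 1" using num_terms_const degree_0_id by metis
    then show False using assms[of "[:0, 1:]" "[:0, 1:]"] by (simp add: pcompose_linear_left)
  qed
  then obtain c where depressed: "coeff (pcompose F [:-c, 1:]) (degree F - 1) = 0"
    using exists_translation_kills_subleading_coeff by blast
  define G where "G = pcompose F [:-c, 1:]"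
  have degG: "degree G = degree F" unfolding G_def by (simp add: degree_pcompose)
  have depressed_G: "coeff G (degree G - 1) = 0" unfolding degG using depressed G_def by simp
  have "\<exists>k. 0 < k \<and> k < degree G \<and> coeff G k \<noteq> 0"
  proof (rule ccontr)
    assume "\<nexists>k. 0 < k \<and> k < degree G \<and> coeff G k \<noteq> 0"
    then have "G = [:coeff G 0:] + monom (lead_coeff G) (degree G)"
      using \<open>degree F \<noteq> 0\<close> degG by (intro poly_eq_const_plus_monom) auto
    moreover have "lead_coeff G \<noteq> 0" using \<open>degree F \<noteq> 0\<close> degG by (metis degree_0 leading_coeff_0_iff)
    ultimately show False using not_binomial[of "[:-c, 1:]"] unfolding G_def by simp
  qed
  then obtain k where "0 < k" "k < degree G" "coeff G k \<noteq> 0" by blast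
  then have "finite (linear_semiconjugacies G)"
    using finite_linear_semiconjugacies_of_depressed[OF depressed_G] by blast
  moreover have "F = pcompose G [:c, 1:]"
    unfolding G_def by (simp flip: pcompose_assoc add: pcompose_linear_left)
  ultimately have "finite (linear_semiconjugacies F)"
    using finite_linear_semiconjugacies_translate[of G c] by simp
  then show ?thesis unfolding linear_semiconjugacies_def .
qed

end
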